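(* Let $\omega\in\mathbb T^1\setminus\mathbb Q$, $f\in\mathcal V_\omega$, $j\in\mathbb N$ and $\theta\in\Omega_j$, where $\Omega_j=\mathbb T^1\setminus\bigcup_{k=j}^\infty\bigcup_{l=0}^{2K_kM_k}(\mathcal I_k+l\omega)$. Then for all $n\in\mathbb N$ and all integers $k$ with $0\le k\le n-(2K_{j-1}M_{j-1}-M_{j-1}-1)$ we have $i_k^n\ge p_k^n(\theta)$, where $i_k^n=\max\{l\in\mathbb N_0: n-k\ge 2K_lM_l-M_l-1\}$ and $p_k^n(\theta)=\max\{p\in\mathbb N_0:\ \exists\, l\in[M_{p-1},\min\{n,\,n-k+M_p+1\}]\cap\mathbb Z \text{ with } \theta-l\omega\in\mathcal I_p\}$, with the conventions $\max\emptyset=-1$ and $M_{-1}=0$.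
   Context: Notation: $\mathbb T^1=\mathbb R/\mathbb Z$, $d$ the usual distance on $\mathbb T^1$, $\pi_1,\pi_2$ the coordinate projections of $\mathbb T^2=\mathbb T^1\times\mathbb T^1$, $\mathrm{Leb}$ Lebesgue measure on $\mathbb T^1$. Skew products: for irrational $\omega$, $\mathcal F_\omega$ is the set of $C^1$-diffeomorphisms $f$ of $\mathbb T^2$ homotopic to the identity of the form $f(\theta,x)=(\theta+\omega,f_\theta(x))$. Write $f^k_\theta(x)=\pi_2(f^k(\theta,x))$ for $k\in\mathbb Z$. Invariant graphs: a measurable $\phi:\mathbb T^1\to\mathbb T^1$ is an invariant graph if $f_\theta(\phi(\theta))=\phi(\theta+\omega)$ for Lebesgue-a.e. $\theta$; graphs agreeing a.e. are identified. Its Lyapunov exponent is $\lambda(\phi)=\int_{\mathbb T^1}\log|\partial_xf_\theta(\phi(\theta))|\,d\theta$. It is an SNA (resp. SNR) if $\lambda(\phi)<0$ (resp. $>0$) and there is no continuous function a.e. equal to $\phi$. The associated measure is $\mu_\phi(A)=\mathrm{Leb}(\pi_1(A\cap\Phi))$, $\Phi=\{(\theta,\phi(\theta))\}$. The class $\mathcal V_\omega$: $f\in\mathcal F_\omega$ belongs to $\mathcal V_\omega$ if the following hold for some choice of data. (i) There are disjoint closed intervals $C=[c^-,c^+]$, $E=[e^-,e^+]\subseteq\mathbb T^1$ and a set $\mathcal I_0\subseteq\mathbb T^1$ which is a union of $\mathcal N$ disjoint open intervals, and constants $\alpha>4$, $S>0$, such that: $f_\theta(x)\in\mathrm{int}(C)$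 whenever $x\notin(e^-,e^+)$ and $\theta\notin\mathcal I_0$; for all $\theta,\theta',x,x'$: $\alpha^{-2}d(x,x')\le d(f_\theta(x),f_\theta(x'))\le\alpha^2d(x,x')$ and $d(f_\theta(x),f_{\theta'}(x))\le S\,d(\theta,\theta')$; $|\partial_xf_\theta(x)|\le\alpha^{-1}$ for $x\in C$; $|\partial_xf_\theta(x)|\ge\alpha$ for $x\in E$. (ii) Integers $\kappa\ge2$, $K_0\ge1$, $K_n=K_0\kappa^n$, $b_0=1$, $b_n=(1-1/K_{n-1})b_{n-1}$, with $b=\lim_n b_n>\sqrt{5/6}$. A super-exponentially increasing integer sequence $(M_n)_{n\ge0}$ with $M_0\ge2$ and $M_{n+1}\le2\alpha^{M_n/16}$. A non-increasing positive sequence $(\varepsilon_n)$ with $\varepsilon_0\le1$ and $\varepsilon_{n+1}\le2\alpha^{-M_n/4}/s$ for a fixed $s>0$. Moreover $\alpha\ge\alpha_*$ and $\varepsilon_0\le\varepsilon_*$, where $\alpha_*>1,\varepsilon_*>0$ are thresholds guaranteeing $\sum_{n\ge0}(2K_nM_n+1)\mathcal N\varepsilon_n\le\sum_{n\ge0}\varepsilon_n^{1/2}<1/16$; and each component of $\mathcal I_0$ has length $<\varepsilon_0$. (iii) Critical regions: recursively $\mathcal A_n=(\mathcal I_n-(M_n-1)\omega)\times C$, $\mathcal B_n=(\mathcal I_n+(M_n+1)\omega)\times E$, $\mathcal I_{n+1}=\mathrm{int}\,\pi_1\big(f^{M_n-1}(\mathcal A_n)\cap f^{-(M_n+1)}(\mathcal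 B_n)\big)$. Let $\mathcal W_n^+=\bigcup_{j=0}^n\bigcup_{l=1}^{M_j+1}(\mathcal I_j+l\omega)$, $\mathcal W_n^-=\bigcup_{j=0}^n\bigcup_{l=-(M_j-1)}^{0}(\mathcal I_j+l\omega)$, $\mathcal W_{-1}^\pm=\emptyset$. For every $n\in\mathbb N$: $\mathcal I_j\ne\emptyset$ for $j\le n$; $\mathcal I_j\cap\bigcup_{k=1}^{2K_jM_j}(\mathcal I_j+k\omega)=\emptyset$ for $j=0,\dots,n$; $\big((\mathcal I_j-(M_j-1)\omega)\cup(\mathcal I_j+(M_j+1)\omega)\big)\cap(\mathcal W_{j-1}^+\cup\mathcal W_{j-1}^-)=\emptyset$ for $j=1,\dots,n$; and $\mathcal I_n$ has exactly $\mathcal N$ connected components, each of length $<\varepsilon_n$. (iv) $f$ has an SNA $\phi^+$ and an SNR $\phi^-$, and $\mu_{\phi^+},\mu_{\phi^-}$ are the only $f$-invariant ergodic probability measures. (v) $f$ is minimal. *)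

theory Defs
  imports "HOL-Probability.Probability"
begin

text \<open>Points of T1 = R/Z are represented by reals; subsets of T1 by 1-periodic
subsets of R; points and subsets of T2 by (periodic subsets of) R x R.
Maps of T1 are represented by real functions whose values are read modulo 1.\<close>

definition tdist :: "real \<Rightarrow> real \<Rightarrow> real" where
  "tdist x y = \<bar>(x - y) - of_int (round (x - y))\<bar>"

definition tshift :: "real set \<Rightarrow> real \<Rightarrow> real set" where
  "tshift A t = (\<lambda>x. x + t) ` A"

definition arc_cl :: "real \<Rightarrow> real \<Rightarrow> real set" where
  "arc_cl a b = {x. \<exists>m::int. a \<le> x + of_int m \<and> x + of_int m \<le> b}"

definition arc_op :: "real \<Rightarrow> real \<Rightarrow> real set" where
  "arc_op a b = {x. \<exists>m::int. a < x + of_int m \<and> x + of_int m < b}"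

definition arcs_union :: "real set \<Rightarrow> nat \<Rightarrow> real \<Rightarrow> bool" where
  "arcs_union A N eps \<longleftrightarrow> (\<exists>a b :: nat \<Rightarrow> real.
     (\<forall>i<N. a i < b i \<and> b i - a i < eps) \<and>
     (\<forall>i<N. \<forall>i'<N. i \<noteq> i' \<longrightarrow> arc_op (a i) (b i) \<inter> arc_op (a i') (b i') = {}) \<and>
     A = (\<Union>i<N. arc_op (a i) (b i)))"

text \<open>F is the lift of the fibre maps: f(theta,x) = (theta+omega, F theta x mod 1).\<close>
definition skew :: "real \<Rightarrow> (real \<Rightarrow> real \<Rightarrow> real) \<Rightarrow> real \<times> real \<Rightarrow> real \<times> real" where
  "skew \<omega> F = (\<lambda>(\<theta>, x). (\<theta> + \<omega>, F \<theta> x))"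

definition dxF :: "(real \<Rightarrow> real \<Rightarrow> real) \<Rightarrow> real \<Rightarrow> real \<Rightarrow> real" where
  "dxF F \<theta> x = deriv (F \<theta>) x"

text \<open>f in F_omega: C1 diffeomorphism of T2 homotopic to the identity of skew form\<close>
definition in_F :: "real \<Rightarrow> (real \<Rightarrow> real \<Rightarrow> real) \<Rightarrow> bool" where
  "in_F \<omega> F \<longleftrightarrow>
     (\<exists>Dt Dx :: real \<times> real \<Rightarrow> real. continuous_on UNIV Dt \<and> continuous_on UNIV Dx \<and>
        (\<forall>p. ((\<lambda>q. F (fst q) (snd q)) has_derivative (\<lambda>h. Dt p * fst h + Dx p * snd h)) (at p))) \<and>
     (\<forall>\<theta> x. F (\<theta> + 1) x = F \<theta> x) \<and>
     (\<forall>\<theta> x. F \<theta> (x + 1) = F \<theta> x + 1) \<and>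
     (\<forall>\<theta> x. dxF F \<theta> x \<noteq> 0)"

definition Leb1 :: "real measure" where
  "Leb1 = lebesgue_on {0..<1}"

definition T2M :: "(real \<times> real) measure" where
  "T2M = restrict_space borel ({0..<1} \<times> {0..<1})"

definition tmap :: "real \<Rightarrow> (real \<Rightarrow> real \<Rightarrow> real) \<Rightarrow> real \<times> real \<Rightarrow> real \<times> real" where
  "tmap \<omega> F = (\<lambda>(\<theta>, x). (frac (\<theta> + \<omega>), frac (F \<theta> x)))"

definition inv_graph :: "real \<Rightarrow> (real \<Rightarrow> real \<Rightarrow> real) \<Rightarrow> (real \<Rightarrow> real) \<Rightarrow> bool" where
  "inv_graph \<omega> F \<phi> \<longleftrightarrow> \<phi> \<in> borel_measurable borel \<and> (\<forall>\<theta>. \<phi> (\<theta> + 1) = \<phi> \<theta>) \<and>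
     (AE \<theta> in Leb1. tdist (F \<theta> (\<phi> \<theta>)) (\<phi> (\<theta> + \<omega>)) = 0)"

definition lyap :: "(real \<Rightarrow> real \<Rightarrow> real) \<Rightarrow> (real \<Rightarrow> real) \<Rightarrow> real" where
  "lyap F \<phi> = integral\<^sup>L Leb1 (\<lambda>\<theta>. ln \<bar>dxF F \<theta> (\<phi> \<theta>)\<bar>)"

definition circ_continuous :: "(real \<Rightarrow> real) \<Rightarrow> bool" where
  "circ_continuous \<psi> \<longleftrightarrow> (\<forall>\<theta> e. e > 0 \<longrightarrow> (\<exists>d>0. \<forall>\<theta>'. tdist \<theta> \<theta>' < d \<longrightarrow> tdist (\<psi> \<theta>) (\<psi> \<theta>') < e))"

definition ae_continuous :: "(real \<Rightarrow> real) \<Rightarrow> bool" where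
  "ae_continuous \<phi> \<longleftrightarrow> (\<exists>\<psi>. circ_continuous \<psi> \<and> (AE \<theta> in Leb1. tdist (\<psi> \<theta>) (\<phi> \<theta>) = 0))"

definition is_SNA :: "real \<Rightarrow> (real \<Rightarrow> real \<Rightarrow> real) \<Rightarrow> (real \<Rightarrow> real) \<Rightarrow> bool" where
  "is_SNA \<omega> F \<phi> \<longleftrightarrow> inv_graph \<omega> F \<phi> \<and> lyap F \<phi> < 0 \<and> \<not> ae_continuous \<phi>"

definition is_SNR :: "real \<Rightarrow> (real \<Rightarrow> real \<Rightarrow> real) \<Rightarrow> (real \<Rightarrow> real) \<Rightarrow> bool" where
  "is_SNR \<omega> F \<phi> \<longleftrightarrow> inv_graph \<omega> F \<phi> \<and> lyap F \<phi> > 0 \<and> \<not> ae_continuous \<phi>"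

text \<open>mu_phi(A) = Leb(pi_1(A \<inter> Phi))\<close>
definition graph_measure :: "(real \<Rightarrow> real) \<Rightarrow> (real \<times> real) measure" where
  "graph_measure \<phi> = distr Leb1 T2M (\<lambda>\<theta>. (\<theta>, frac (\<phi> \<theta>)))"

definition inv_ergodic_prob :: "real \<Rightarrow> (real \<Rightarrow> real \<Rightarrow> real) \<Rightarrow> (real \<times> real) measure \<Rightarrow> bool" where
  "inv_ergodic_prob \<omega> F M \<longleftrightarrow> prob_space M \<and> sets M = sets T2M \<and>
     distr M T2M (tmap \<omega> F) = M \<and>
     (\<forall>A \<in> sets M. tmap \<omega> F -` A \<inter> space M = A \<longrightarrow> measure M A = 0 \<or> measure M A = 1)"

definition minimal :: "real \<Rightarrow> (real \<Rightarrow> real \<Rightarrow> real) \<Rightarrow> bool" where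
  "minimal \<omega> F \<longleftrightarrow> (\<forall>K :: (real \<times> real) set. closed K \<and>
      (\<forall>p\<in>K. \<forall>m n :: int. (fst p + of_int m, snd p + of_int n) \<in> K) \<and>
      skew \<omega> F ` K = K \<longrightarrow> K = {} \<or> K = UNIV)"

primrec critI :: "real \<Rightarrow> (real \<Rightarrow> real \<Rightarrow> real) \<Rightarrow> real \<Rightarrow> real \<Rightarrow> real \<Rightarrow> real \<Rightarrow>
     real set \<Rightarrow> (nat \<Rightarrow> nat) \<Rightarrow> nat \<Rightarrow> real set" where
  "critI \<omega> F cm cp em ep I0 M 0 = I0"
| "critI \<omega> F cm cp em ep I0 M (Suc n) =
     interior (fst ` (((skew \<omega> F) ^^ (M n - 1)) `
         {(\<theta>, x). \<theta> \<in> tshift (critI \<omega> F cm cp em ep I0 M n) (- (real (M n) - 1) * \<omega>) \<and> x \<in> arc_cl cm cp}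
       \<inter> ((skew \<omega> F) ^^ (M n + 1)) -`
         {(\<theta>, x). \<theta> \<in> tshift (critI \<omega> F cm cp em ep I0 M n) ((real (M n) + 1) * \<omega>) \<and> x \<in> arc_cl em ep}))"

definition Wplus :: "real \<Rightarrow> (nat \<Rightarrow> real set) \<Rightarrow> (nat \<Rightarrow> nat) \<Rightarrow> nat \<Rightarrow> real set" where
  "Wplus \<omega> I M n = (\<Union>j\<le>n. \<Union>l\<in>{1..M j + 1}. tshift (I j) (real l * \<omega>))"

definition Wminus :: "real \<Rightarrow> (nat \<Rightarrow> real set) \<Rightarrow> (nat \<Rightarrow> nat) \<Rightarrow> nat \<Rightarrow> real set" where
  "Wminus \<omega> I M n = (\<Union>j\<le>n. \<Union>l\<in>{- (int (M j) - 1)..0}. tshift (I j) (of_int l * \<omega>))"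

definition Kseq :: "nat \<Rightarrow> nat \<Rightarrow> nat \<Rightarrow> nat" where
  "Kseq K0 \<kappa> n = K0 * \<kappa> ^ n"

definition V_data :: "real \<Rightarrow> (real \<Rightarrow> real \<Rightarrow> real) \<Rightarrow> real \<Rightarrow> real \<Rightarrow> real \<Rightarrow> real \<Rightarrow>
    real set \<Rightarrow> nat \<Rightarrow> real \<Rightarrow> real \<Rightarrow> nat \<Rightarrow> nat \<Rightarrow> (nat \<Rightarrow> nat) \<Rightarrow> (nat \<Rightarrow> real) \<Rightarrow> real \<Rightarrow> bool" where
  "V_data \<omega> F cm cp em ep I0 N \<alpha> S \<kappa> K0 M \<epsilon> s \<longleftrightarrow>
   (let K = Kseq K0 \<kappa>; I = critI \<omega> F cm cp em ep I0 M in
   in_F \<omega> F \<and>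
   \<comment> \<open>(i)\<close>
   cm < cp \<and> cp - cm < 1 \<and> em < ep \<and> ep - em < 1 \<and>
   arc_cl cm cp \<inter> arc_cl em ep = {} \<and>
   arcs_union I0 N (\<epsilon> 0) \<and> \<alpha> > 4 \<and> S > 0 \<and>
   (\<forall>\<theta> x. x \<notin> arc_op em ep \<and> \<theta> \<notin> I0 \<longrightarrow> F \<theta> x \<in> arc_op cm cp) \<and>
   (\<forall>\<theta> x x'. tdist x x' / \<alpha>\<^sup>2 \<le> tdist (F \<theta> x) (F \<theta> x') \<and>
              tdist (F \<theta> x) (F \<theta> x') \<le> \<alpha>\<^sup>2 * tdist x x') \<and>
   (\<forall>\<theta> \<theta>' x. tdist (F \<theta> x) (F \<theta>' x) \<le> S * tdist \<theta> \<theta>') \<and>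
   (\<forall>\<theta> x. x \<in> arc_cl cm cp \<longrightarrow> \<bar>dxF F \<theta> x\<bar> \<le> 1 / \<alpha>) \<and>
   (\<forall>\<theta> x. x \<in> arc_cl em ep \<longrightarrow> \<bar>dxF F \<theta> x\<bar> \<ge> \<alpha>) \<and>
   \<comment> \<open>(ii)\<close>
   \<kappa> \<ge> 2 \<and> K0 \<ge> 1 \<and>
   (\<exists>b. (\<lambda>n. \<Prod>i<n. (1 - 1 / real (K i))) \<longlonglongrightarrow> b \<and> b > sqrt (5 / 6)) \<and>
   strict_mono M \<and> (\<forall>c::real. \<forall>\<^sub>F n in sequentially. c ^ n \<le> real (M n)) \<and>
   M 0 \<ge> 2 \<and> (\<forall>n. real (M (Suc n)) \<le> 2 * \<alpha> powr (real (M n) / 16)) \<and>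
   s > 0 \<and> (\<forall>n. \<epsilon> n > 0) \<and> antimono \<epsilon> \<and> \<epsilon> 0 \<le> 1 \<and>
   (\<forall>n. \<epsilon> (Suc n) \<le> 2 * \<alpha> powr (- real (M n) / 4) / s) \<and>
   summable (\<lambda>n. (2 * real (K n) * real (M n) + 1) * real N * \<epsilon> n) \<and>
   summable (\<lambda>n. sqrt (\<epsilon> n)) \<and>
   (\<Sum>n. (2 * real (K n) * real (M n) + 1) * real N * \<epsilon> n) \<le> (\<Sum>n. sqrt (\<epsilon> n)) \<and>
   (\<Sum>n. sqrt (\<epsilon> n)) < 1 / 16 \<and>
   \<comment> \<open>(iii)\<close>
   (\<forall>j. I j \<noteq> {}) \<and>
   (\<forall>j. I j \<inter> (\<Union>k\<in>{1..2 * K j * M j}. tshift (I j) (real k * \<omega>)) = {}) \<and>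
   (\<forall>j\<ge>1. (tshift (I j) (- (real (M j) - 1) * \<omega>) \<union> tshift (I j) ((real (M j) + 1) * \<omega>))
            \<inter> (Wplus \<omega> I M (j - 1) \<union> Wminus \<omega> I M (j - 1)) = {}) \<and>
   (\<forall>n. arcs_union (I n) N (\<epsilon> n)) \<and>
   \<comment> \<open>(iv)\<close>
   (\<exists>\<phi>p \<phi>m. is_SNA \<omega> F \<phi>p \<and> is_SNR \<omega> F \<phi>m \<and>
      (\<forall>\<mu>. inv_ergodic_prob \<omega> F \<mu> \<longleftrightarrow> \<mu> = graph_measure \<phi>p \<or> \<mu> = graph_measure \<phi>m)) \<and>
   \<comment> \<open>(v)\<close>
   minimal \<omega> F)"

definition Omega :: "real \<Rightarrow> (nat \<Rightarrow> real set) \<Rightarrow> (nat \<Rightarrow> nat) \<Rightarrow> (nat \<Rightarrow> nat) \<Rightarrow> nat \<Rightarrow> real set" where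
  "Omega \<omega> I K M j = UNIV - (\<Union>k\<in>{j..}. \<Union>l\<in>{0..2 * K k * M k}. tshift (I k) (real l * \<omega>))"

definition max_m1 :: "nat set \<Rightarrow> int" where
  "max_m1 A = (if A = {} then -1 else int (Max A))"

definition Mprev :: "(nat \<Rightarrow> nat) \<Rightarrow> nat \<Rightarrow> nat" where
  "Mprev M p = (if p = 0 then 0 else M (p - 1))"

definition iidx :: "(nat \<Rightarrow> nat) \<Rightarrow> (nat \<Rightarrow> nat) \<Rightarrow> int \<Rightarrow> int \<Rightarrow> int" where
  "iidx K M k n = max_m1 {l. n - k \<ge> 2 * int (K l) * int (M l) - int (M l) - 1}"

definition pidx :: "real \<Rightarrow> (nat \<Rightarrow> real set) \<Rightarrow> (nat \<Rightarrow> nat) \<Rightarrow> real \<Rightarrow> int \<Rightarrow> int \<Rightarrow> int" where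
  "pidx \<omega> I M \<theta> k n = max_m1 {p. \<exists>l::int. int (Mprev M p) \<le> l \<and>
      l \<le> min n (n - k + int (M p) + 1) \<and> \<theta> - of_int l * \<omega> \<in> I p}"

end

theory Submission
  imports Defs
begin

text \<open>A critical interval \<open>I\<^sub>p\<close> hit at a time \<open>l\<close> lies either below level \<open>j\<close>, where
  the hypothesis on \<open>k\<close> already bounds the threshold \<open>2K\<^sub>pM\<^sub>p - M\<^sub>p - 1\<close> by \<open>n - k\<close>, or at
  level \<open>p \<ge> j\<close>, where \<open>\<theta> \<in> \<Omega>\<^sub>j\<close> forces \<open>l > 2K\<^sub>pM\<^sub>p\<close>, and \<open>l \<le> n - k + M\<^sub>p + 1\<close> gives the
  same bound. So every index counted by \<open>p\<^sup>n\<^sub>k(\<theta>)\<close> is counted by \<open>i\<^sup>n\<^sub>k\<close>.\<close>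

definition threshold :: "(nat \<Rightarrow> nat) \<Rightarrow> (nat \<Rightarrow> nat) \<Rightarrow> nat \<Rightarrow> int" where
  "threshold K M l = 2 * int (K l) * int (M l) - int (M l) - 1"

lemma max_m1_mono:
  assumes "finite A" "B \<subseteq> A"
  shows "max_m1 B \<le> max_m1 A"
  using assms finite_subset[OF assms(2,1)] unfolding max_m1_def by (auto intro: Max_mono)

lemma threshold_mono:
  assumes "mono K" "mono M" "\<And>l. K l \<ge> 1" "p \<le> q"
  shows "threshold K M p \<le> threshold K M q"
proof -
  have K: "int (K p) \<le> int (K q)" "1 \<le> int (K p)" and M: "int (M p) \<le> int (M q)"
    using assms by (auto simp: mono_def)
  have "int (M p) * (2 * int (K p) - 1) \<le> int (M q) * (2 * int (K q) - 1)"
    by (rule mult_mono) (use K M in auto)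
  thus ?thesis unfolding threshold_def by (simp add: algebra_simps)
qed

lemma finite_threshold_below:
  assumes "strict_mono M" "\<And>l. K l \<ge> 1"
  shows "finite {l. threshold K M l \<le> c}"
proof (rule finite_subset)
  show "{l. threshold K M l \<le> c} \<subseteq> {..nat (c + 1)}"
  proof
    fix l assume "l \<in> {l. threshold K M l \<le> c}"
    moreover have "int (M l) - 1 \<le> threshold K M l"
    proof -
      have "int (M l) * 1 \<le> int (M l) * int (K l)"
        using assms(2)[of l] by (intro mult_left_mono) auto
      thus ?thesis unfolding threshold_def by (simp add: algebra_simps)
    qed
    moreover have "l \<le> M l" using assms(1) by (rule strict_mono_imp_increasing)
    ultimately show "l \<in> {..nat (c + 1)}" by auto
  qed
qed simp

lemma Omega_avoids_critical_returns:
  assumes "\<theta> \<in> Omega \<omega> I K M j" "j \<le> p" "0 \<le> l" "\<theta> - of_int l * \<omega> \<in> I p"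
  shows "2 * int (K p) * int (M p) < l"
proof (rule ccontr)
  assume "\<not> ?thesis"
  hence "l \<le> int (2 * K p * M p)" by simp
  hence "nat l \<in> {0..2 * K p * M p}" using assms(3) by (simp only: nat_le_iff atLeastAtMost_iff) simp
  moreover have "\<theta> \<in> tshift (I p) (real (nat l) * \<omega>)"
    unfolding tshift_def using assms(3,4)
    by (auto intro!: image_eqI[where x="\<theta> - of_int l * \<omega>"])
  ultimately show False using assms(1,2) unfolding Omega_def by blast
qed

lemma V_data_sequences:
  assumes "V_data \<omega> F cm cp em ep I0 N \<alpha> S \<kappa> K0 M \<epsilon> s"
  shows "mono (Kseq K0 \<kappa>)" "\<And>l. Kseq K0 \<kappa> l \<ge> 1" "strict_mono M"
proof -
  have "\<kappa> \<ge> 2" "K0 \<ge> 1" "strict_mono M"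
    using assms unfolding V_data_def Let_def by auto
  thus "mono (Kseq K0 \<kappa>)" "\<And>l. Kseq K0 \<kappa> l \<ge> 1" "strict_mono M"
    unfolding Kseq_def by (auto intro!: monoI simp: power_increasing)
qed

theorem proposition4p4:
  fixes \<omega> :: real and F :: "real \<Rightarrow> real \<Rightarrow> real"
    and cm cp em ep \<alpha> S s \<theta> :: real and I0 :: "real set"
    and N \<kappa> K0 j n :: nat and M :: "nat \<Rightarrow> nat" and \<epsilon> :: "nat \<Rightarrow> real" and k :: int
  assumes "\<omega> \<notin> \<rat>"
    and "V_data \<omega> F cm cp em ep I0 N \<alpha> S \<kappa> K0 M \<epsilon> s"
    and "j \<ge> 1"
    and "\<theta> \<in> Omega \<omega> (critI \<omega> F cm cp em ep I0 M) (Kseq K0 \<kappa>) M j"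
    and "n \<ge> 1"
    and "0 \<le> k"
    and "k \<le> int n - (2 * int (Kseq K0 \<kappa> (j - 1)) * int (M (j - 1)) - int (M (j - 1)) - 1)"
  shows "iidx (Kseq K0 \<kappa>) M k (int n) \<ge> pidx \<omega> (critI \<omega> F cm cp em ep I0 M) M \<theta> k (int n)"
proof -
  define K where "K = Kseq K0 \<kappa>"
  define I where "I = critI \<omega> F cm cp em ep I0 M"
  have K: "mono K" "\<And>l. K l \<ge> 1" and M: "strict_mono M"
    using V_data_sequences[OF assms(2)] unfolding K_def by auto
  define A where "A = {l. threshold K M l \<le> int n - k}"
  define B where "B = {p. \<exists>l::int. int (Mprev M p) \<le> l \<and>
      l \<le> min (int n) (int n - k + int (M p) + 1) \<and> \<theta> - of_int l * \<omega> \<in> I p}"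
  have "B \<subseteq> A"
  proof
    fix p assume "p \<in> B"
    then obtain l :: int where l: "0 \<le> l" "l \<le> int n - k + int (M p) + 1" "\<theta> - of_int l * \<omega> \<in> I p"
      unfolding B_def by (auto dest: order_trans[OF of_nat_0_le_iff])
    show "p \<in> A"
    proof (cases "j \<le> p")
      case True
      with l assms(4) have "2 * int (K p) * int (M p) < l"
        unfolding K_def I_def by (intro Omega_avoids_critical_returns) auto
      with l(2) show ?thesis unfolding A_def threshold_def by simp
    next
      case False
      with K strict_mono_mono[OF M] have "threshold K M p \<le> threshold K M (j - 1)"
        by (intro threshold_mono) auto
      with assms(7) show ?thesis unfolding A_def threshold_def K_def by simp
    qed
  qed
  moreover have "finite A" unfolding A_def using M K(2) by (rule finite_threshold_below)
  ultimately have "max_m1 B \<le> max_m1 A" by (intro max_m1_mono)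
  thus ?thesis unfolding iidx_def pidx_def A_def B_def threshold_def K_def I_def by (simp add: ac_simps)
qed

end
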